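(* For every finite hyperplane arrangement $A$ in $\mathbb{R}^d$ and every $q\in\mathbb{R}^d$, $\mathrm{HTvD}(A,q)\ge \frac{1}{d}\mathrm{RD}(A,q)$.
   Context: Regression depth $\mathrm{RD}(A,q)$: the minimum, over all closed rays emanating from $q$, of the number of hyperplanes of $A$ intersected by or parallel to the ray (a hyperplane containing $q$ counts for every ray). Hyperplane Tverberg depth $\mathrm{HTvD}(A,q)$: the maximum $r$ such that $A$ can be partitioned into $r$ parts with $\mathrm{RD}(\text{part},q)\ge 1$ for each part. *)

theory Defs
  imports "HOL-Analysis.Analysis" "HOL-Library.Disjoint_Sets"
begin

definition hyperplane :: "'a::euclidean_space set \<Rightarrow> bool" where
  "hyperplane H \<longleftrightarrow> (\<exists>a b. a \<noteq> 0 \<and> H = {x. inner a x = b})"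

text \<open>The closed ray from q in direction v (v nonzero) meets H: it intersects H, or
  it is parallel to H (v lies in the direction space of H).\<close>
definition ray_meets :: "'a::euclidean_space \<Rightarrow> 'a \<Rightarrow> 'a set \<Rightarrow> bool" where
  "ray_meets q v H \<longleftrightarrow> (\<exists>t::real. t \<ge> 0 \<and> q + t *\<^sub>R v \<in> H) \<or> (\<forall>x\<in>H. x + v \<in> H)"

definition RD :: "'a::euclidean_space set set \<Rightarrow> 'a \<Rightarrow> nat" where
  "RD A q = (INF v\<in>{v. v \<noteq> 0}. card {H\<in>A. ray_meets q v H})"

definition HTvD :: "'a::euclidean_space set set \<Rightarrow> 'a \<Rightarrow> nat" where
  "HTvD A q = Sup {r. \<exists>P. partition_on A P \<and> card P = r \<and> (\<forall>B\<in>P. RD B q \<ge> 1)}"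

end

theory Submission
  imports Defs
begin

text \<open>A ray from q in direction v meets a hyperplane H exactly when v lies in a closed half-space
  \<open>{v. w\<^sub>H \<bullet> v \<le> 0}\<close>, where \<open>w\<^sub>H\<close> is a normal of H pointing towards the side of q (and
  \<open>w\<^sub>H = 0\<close> if \<open>q \<in> H\<close>). Hence a family has regression depth at least 1 iff 0 lies in the convex
  hull of its normals. Greedily remove from A a subfamily B whose normals have 0 in their convex
  hull and which is minimal with this property: by Caratheodory, B has at most d + 1 members
  and no half-space through the origin contains more than d of their normals. When the greedy
  step is no longer possible, some direction v misses all remaining hyperplanes, which join the
  last part; the ray in direction v meets at most d hyperplanes of each of the r parts, so
  RD(A, q) \<le> d r \<le> d HTvD(A, q).\<close>

lemma zero_in_convex_hull_iff:
  fixes S :: "'a::euclidean_space set"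
  assumes "finite S"
  shows "0 \<in> convex hull S \<longleftrightarrow> (\<forall>v. v \<noteq> 0 \<longrightarrow> (\<exists>s\<in>S. s \<bullet> v \<le> 0))"
proof
  assume "0 \<in> convex hull S"
  show "\<forall>v. v \<noteq> 0 \<longrightarrow> (\<exists>s\<in>S. s \<bullet> v \<le> 0)"
  proof (intro allI impI, rule ccontr)
    fix v :: 'a
    assume "\<not> (\<exists>s\<in>S. s \<bullet> v \<le> 0)"
    then have "S \<subseteq> {x. v \<bullet> x > 0}" by (auto simp: inner_commute)
    then have "convex hull S \<subseteq> {x. v \<bullet> x > 0}"
      by (rule hull_minimal) (rule convex_halfspace_gt)
    with \<open>0 \<in> convex hull S\<close> show False by auto
  qed
next
  assume meets: "\<forall>v. v \<noteq> 0 \<longrightarrow> (\<exists>s\<in>S. s \<bullet> v \<le> 0)"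
  show "0 \<in> convex hull S"
  proof (rule ccontr)
    assume "0 \<notin> convex hull S"
    moreover have "closed (convex hull S)"
      using assms by (simp add: compact_imp_closed finite_imp_compact_convex_hull)
    ultimately obtain a b where "a \<noteq> 0" "0 < b" and sep: "\<forall>x\<in>convex hull S. a \<bullet> x > b"
      using separating_hyperplane_closed_0[of "convex hull S"] by auto
    then obtain s where "s \<in> S" "s \<bullet> a \<le> 0" using meets by blast
    with sep have "a \<bullet> s > b" by (simp add: hull_inc)
    with \<open>0 < b\<close> \<open>s \<bullet> a \<le> 0\<close> show False by (simp add: inner_commute)
  qed
qed

definition minimal_zero_hull :: "'a::euclidean_space set \<Rightarrow> bool" where
  "minimal_zero_hull S \<longleftrightarrow> 0 \<in> convex hull S \<and> (\<forall>S'. S' \<subset> S \<longrightarrow> 0 \<notin> convex hull S')"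

lemma exists_minimal_zero_hull_subset:
  fixes T :: "'a::euclidean_space set"
  assumes "finite T" "0 \<in> convex hull T"
  shows "\<exists>S\<subseteq>T. minimal_zero_hull S"
  using assms
proof (induction T rule: finite_psubset_induct)
  case (psubset T)
  show ?case
  proof (cases "\<exists>S'. S' \<subset> T \<and> 0 \<in> convex hull S'")
    case True
    then obtain S' where "S' \<subset> T" "0 \<in> convex hull S'" by blast
    with psubset.IH show ?thesis by (meson order.trans psubset_imp_subset)
  next
    case False
    with psubset.prems show ?thesis unfolding minimal_zero_hull_def by blast
  qed
qed

lemma minimal_zero_hull_finite:
  assumes "minimal_zero_hull S"
  shows "finite S"
proof (rule ccontr)
  assume "infinite S"
  obtain S' where "finite S'" "S' \<subseteq> S" "0 \<in> convex hull S'"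
    using assms unfolding minimal_zero_hull_def caratheodory_aff_dim[of S] by auto
  with \<open>infinite S\<close> assms show False
    unfolding minimal_zero_hull_def by (metis psubsetI)
qed

lemma minimal_zero_hull_card_le:
  assumes "minimal_zero_hull S"
  shows "int (card S) \<le> aff_dim S + 1"
proof -
  obtain S' where "S' \<subseteq> S" "card S' \<le> aff_dim S + 1" "0 \<in> convex hull S'"
    using assms unfolding minimal_zero_hull_def caratheodory_aff_dim[of S] by auto
  moreover from assms calculation have "S' = S"
    unfolding minimal_zero_hull_def by blast
  ultimately show ?thesis by simp
qed

lemma minimal_zero_hull_positive_weights:
  assumes min: "minimal_zero_hull S"
  obtains u where "\<forall>s\<in>S. u s > 0" "(\<Sum>s\<in>S. u s *\<^sub>R s) = 0"
proof -
  have fin: "finite S" using min by (rule minimal_zero_hull_finite)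
  obtain u where u: "\<forall>s\<in>S. 0 \<le> u s" "sum u S = 1" "(\<Sum>s\<in>S. u s *\<^sub>R s) = 0"
    using min unfolding minimal_zero_hull_def convex_hull_finite[OF fin] by auto
  have "u s > 0" if "s \<in> S" for s
  proof (rule ccontr)
    assume "\<not> u s > 0"
    then have "u s = 0" using u(1) that by force
    then have "0 \<in> convex hull (S - {s})"
      unfolding convex_hull_finite[OF finite_Diff[OF fin]]
      using u that fin by (auto simp: sum_diff1 intro!: exI[of _ u])
    with min that show False unfolding minimal_zero_hull_def by blast
  qed
  with u(3) that show thesis by blast
qed

text \<open>If all of S lay in the half-space \<open>{s. s \<bullet> v \<le> 0}\<close>, the positive weights would force S
  into the hyperplane \<open>v\<^sup>\<bottom>\<close>; so either \<open>card S \<le> d\<close>, or \<open>card S = d + 1\<close> and some s is outside.\<close>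

lemma minimal_zero_hull_card_halfspace_le_DIM:
  fixes S :: "'a::euclidean_space set"
  assumes min: "minimal_zero_hull S" and "v \<noteq> 0"
  shows "card {s\<in>S. s \<bullet> v \<le> 0} \<le> DIM('a)"
proof (cases "card S \<le> DIM('a)")
  case True
  have "card {s\<in>S. s \<bullet> v \<le> 0} \<le> card S"
    using minimal_zero_hull_finite[OF min] by (intro card_mono) auto
  with True show ?thesis by linarith
next
  case False
  have fin: "finite S" using min by (rule minimal_zero_hull_finite)
  have full: "aff_dim S = int DIM('a)" and card_S: "card S = DIM('a) + 1"
    using False minimal_zero_hull_card_le[OF min] aff_dim_le_DIM[of S] by linarith+
  obtain u where upos: "\<forall>s\<in>S. u s > 0" and usum: "(\<Sum>s\<in>S. u s *\<^sub>R s) = 0"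
    using min by (rule minimal_zero_hull_positive_weights)
  have "\<exists>s\<in>S. s \<bullet> v > 0"
  proof (rule ccontr)
    assume "\<not> ?thesis"
    then have nonpos: "\<forall>s\<in>S. u s * (s \<bullet> v) \<le> 0"
      using upos by (meson less_imp_le mult_nonneg_nonpos not_less)
    have "(\<Sum>s\<in>S. u s * (s \<bullet> v)) = (\<Sum>s\<in>S. u s *\<^sub>R s) \<bullet> v"
      by (simp add: inner_sum_left)
    with usum have "(\<Sum>s\<in>S. - (u s * (s \<bullet> v))) = 0" by (simp add: sum_negf)
    with nonpos fin have "\<forall>s\<in>S. u s * (s \<bullet> v) = 0"
      by (simp add: sum_nonneg_eq_0_iff)
    with upos have "\<forall>s\<in>S. s \<bullet> v = 0" by fastforce
    then have "S \<subseteq> {x. v \<bullet> x = 0}" by (auto simp: inner_commute)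
    then have "affine hull S \<subseteq> {x. v \<bullet> x = 0}"
      by (rule hull_minimal) (rule affine_hyperplane)
    moreover have "affine hull S = UNIV" using full by (simp add: aff_dim_eq_full)
    ultimately have "v \<bullet> v = 0" by blast
    with \<open>v \<noteq> 0\<close> show False by simp
  qed
  then have "{s\<in>S. s \<bullet> v \<le> 0} \<subset> S" by force
  then have "card {s\<in>S. s \<bullet> v \<le> 0} < card S" by (meson fin psubset_card_mono)
  with card_S show ?thesis by simp
qed

lemma exists_minimal_zero_hull_subfamily:
  fixes w :: "'b \<Rightarrow> 'a::euclidean_space"
  assumes "finite A" "0 \<in> convex hull (w ` A)"
  obtains B where "B \<subseteq> A" "B \<noteq> {}" "0 \<in> convex hull (w ` B)"
    "\<And>v. v \<noteq> 0 \<Longrightarrow> card {H\<in>B. w H \<bullet> v \<le> 0} \<le> DIM('a)"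
proof -
  obtain S where "S \<subseteq> w ` A" and min: "minimal_zero_hull S"
    using exists_minimal_zero_hull_subset assms by blast
  then obtain B where B: "B \<subseteq> A" "inj_on w B" "S = w ` B"
    by (auto simp: subset_image_inj)
  have "card {H\<in>B. w H \<bullet> v \<le> 0} \<le> DIM('a)" if "v \<noteq> 0" for v
  proof -
    have "card {H\<in>B. w H \<bullet> v \<le> 0} = card (w ` {H\<in>B. w H \<bullet> v \<le> 0})"
      using B(2) by (simp add: card_image inj_on_subset)
    also have "w ` {H\<in>B. w H \<bullet> v \<le> 0} = {s\<in>S. s \<bullet> v \<le> 0}" using B(3) by auto
    also have "card \<dots> \<le> DIM('a)"
      using min that by (rule minimal_zero_hull_card_halfspace_le_DIM)
    finally show ?thesis .
  qed
  moreover have "0 \<in> convex hull (w ` B)" using min B(3) by (simp add: minimal_zero_hull_def)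
  moreover then have "B \<noteq> {}" by auto
  ultimately show thesis using B(1) that by blast
qed

lemma zero_hull_partition_with_halfspace_bound:
  fixes w :: "'b \<Rightarrow> 'a::euclidean_space"
  assumes "finite A" "0 \<in> convex hull (w ` A)"
  shows "\<exists>P v. partition_on A P \<and> (\<forall>B\<in>P. 0 \<in> convex hull (w ` B)) \<and> v \<noteq> 0 \<and>
           card {H\<in>A. w H \<bullet> v \<le> 0} \<le> DIM('a) * card P"
  using assms
proof (induction A rule: finite_psubset_induct)
  case (psubset A)
  obtain B where B: "B \<subseteq> A" "B \<noteq> {}" "0 \<in> convex hull (w ` B)"
    and B_halfspace: "\<And>v. v \<noteq> 0 \<Longrightarrow> card {H\<in>B. w H \<bullet> v \<le> 0} \<le> DIM('a)"
    using exists_minimal_zero_hull_subfamily psubset.hyps psubset.prems by blast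
  have finB: "finite B" using B(1) psubset.hyps by (rule finite_subset)
  have split: "card {H\<in>A. w H \<bullet> v \<le> 0}
      \<le> card {H\<in>A - B. w H \<bullet> v \<le> 0} + card {H\<in>B. w H \<bullet> v \<le> 0}" for v
  proof -
    have "{H\<in>A. w H \<bullet> v \<le> 0} \<subseteq> {H\<in>A - B. w H \<bullet> v \<le> 0} \<union> {H\<in>B. w H \<bullet> v \<le> 0}" by blast
    then have "card {H\<in>A. w H \<bullet> v \<le> 0} \<le> card ({H\<in>A - B. w H \<bullet> v \<le> 0} \<union> {H\<in>B. w H \<bullet> v \<le> 0})"
      using psubset.hyps finB by (intro card_mono) auto
    then show ?thesis using card_Un_le order_trans by blast
  qed
  show ?case
  proof (cases "0 \<in> convex hull (w ` (A - B))")
    case True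
    have "A - B \<subset> A" using B(1,2) by blast
    with True psubset.IH obtain P v where P: "partition_on (A - B) P"
      "\<forall>B'\<in>P. 0 \<in> convex hull (w ` B')" "v \<noteq> 0"
      "card {H\<in>A - B. w H \<bullet> v \<le> 0} \<le> DIM('a) * card P"
      by blast
    have disj: "disjnt B (\<Union>P)" using partition_onD1[OF P(1)] by (auto simp: disjnt_def)
    then have part: "partition_on A (insert B P)"
      using partition_on_insert P(1) B(1,2) by blast
    have "finite P" using P(1) psubset.hyps by (blast intro: finite_elements)
    moreover have "B \<notin> P" using disj B(2) by (auto simp: disjnt_def)
    ultimately have "card (insert B P) = card P + 1" by simp
    with split[of v] P(4) B_halfspace[OF P(3)]
    have "card {H\<in>A. w H \<bullet> v \<le> 0} \<le> DIM('a) * card (insert B P)" by simp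
    with part P(2,3) B(3) show ?thesis by blast
  next
    case False
    have "finite (w ` (A - B))" using psubset.hyps by simp
    with False obtain v where "v \<noteq> 0" "\<forall>s\<in>w ` (A - B). \<not> s \<bullet> v \<le> 0"
      by (auto simp: zero_in_convex_hull_iff)
    then have "v \<noteq> 0" "card {H\<in>A - B. w H \<bullet> v \<le> 0} = 0" by (auto simp: card_eq_0_iff)
    with split[of v] B_halfspace[of v]
    have "card {H\<in>A. w H \<bullet> v \<le> 0} \<le> DIM('a) * card {A}" by simp
    moreover have "partition_on A {A}" using B(1,2) by (intro partition_on_space) blast
    ultimately show ?thesis using psubset.prems \<open>v \<noteq> 0\<close> by blast
  qed
qed

lemma ray_meets_hyperplane_iff:
  fixes a q v :: "'a::euclidean_space"
  assumes "a \<noteq> 0"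
  shows "ray_meets q v {x. a \<bullet> x = b} \<longleftrightarrow> ((a \<bullet> q - b) *\<^sub>R a) \<bullet> v \<le> 0"
proof -
  have parallel: "(\<forall>x\<in>{x. a \<bullet> x = b}. x + v \<in> {x. a \<bullet> x = b}) \<longleftrightarrow> a \<bullet> v = 0"
  proof
    assume "\<forall>x\<in>{x. a \<bullet> x = b}. x + v \<in> {x. a \<bullet> x = b}"
    moreover have "a \<bullet> ((b / (a \<bullet> a)) *\<^sub>R a) = b" using assms by simp
    ultimately show "a \<bullet> v = 0" by (metis (mono_tags) add_cancel_left_right inner_add_right mem_Collect_eq)
  qed (simp add: inner_add_right)
  have hits: "(\<exists>t\<ge>0. q + t *\<^sub>R v \<in> {x. a \<bullet> x = b}) \<longleftrightarrow> (a \<bullet> q - b) * (a \<bullet> v) \<le> 0"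
    if "a \<bullet> v \<noteq> 0"
  proof
    assume "\<exists>t\<ge>0. q + t *\<^sub>R v \<in> {x. a \<bullet> x = b}"
    then obtain t where "t \<ge> 0" "a \<bullet> q - b = - t * (a \<bullet> v)" by (auto simp: inner_add_right)
    then show "(a \<bullet> q - b) * (a \<bullet> v) \<le> 0" by (simp add: mult.assoc)
  next
    assume h: "(a \<bullet> q - b) * (a \<bullet> v) \<le> 0"
    define t where "t = (b - a \<bullet> q) / (a \<bullet> v)"
    have "t \<ge> 0"
      using h unfolding t_def by (simp add: zero_le_divide_iff mult_le_0_iff) linarith
    moreover have "a \<bullet> (q + t *\<^sub>R v) = b" unfolding t_def using that by (simp add: inner_add_right)
    ultimately show "\<exists>t\<ge>0. q + t *\<^sub>R v \<in> {x. a \<bullet> x = b}" by auto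
  qed
  show ?thesis
    using parallel hits unfolding ray_meets_def by (cases "a \<bullet> v = 0") auto
qed

lemma hyperplane_ray_meets_iff_halfspace:
  assumes "hyperplane H"
  shows "\<exists>c. \<forall>v. ray_meets q v H \<longleftrightarrow> c \<bullet> v \<le> 0"
  using assms ray_meets_hyperplane_iff unfolding hyperplane_def by blast

lemma RD_le_card_ray_meets:
  assumes "v \<noteq> 0"
  shows "RD A q \<le> card {H\<in>A. ray_meets q v H}"
  unfolding RD_def by (rule cINF_lower) (use assms in auto)

lemma one_le_RD_iff_zero_in_convex_hull:
  fixes w :: "'a::euclidean_space set \<Rightarrow> 'a"
  assumes "finite B" and w: "\<forall>H\<in>B. \<forall>v. ray_meets q v H \<longleftrightarrow> w H \<bullet> v \<le> 0"
  shows "1 \<le> RD B q \<longleftrightarrow> 0 \<in> convex hull (w ` B)"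
proof -
  have meets: "{H\<in>B. ray_meets q v H} = {H\<in>B. w H \<bullet> v \<le> 0}" for v using w by blast
  have hull_iff: "0 \<in> convex hull (w ` B) \<longleftrightarrow> (\<forall>v. v \<noteq> 0 \<longrightarrow> {H\<in>B. w H \<bullet> v \<le> 0} \<noteq> {})"
    using zero_in_convex_hull_iff[of "w ` B"] assms(1) by auto
  show ?thesis
  proof
    assume "1 \<le> RD B q"
    show "0 \<in> convex hull (w ` B)"
      unfolding hull_iff
    proof (intro allI impI)
      fix v :: 'a
      assume "v \<noteq> 0"
      with \<open>1 \<le> RD B q\<close> have "card {H\<in>B. w H \<bullet> v \<le> 0} \<noteq> 0"
        using RD_le_card_ray_meets[of v B q] unfolding meets by linarith
      then show "{H\<in>B. w H \<bullet> v \<le> 0} \<noteq> {}" by (metis card.empty)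
    qed
  next
    assume "0 \<in> convex hull (w ` B)"
    moreover have "{v::'a. v \<noteq> 0} \<noteq> {}" by (metis Basis_zero SOME_Basis empty_iff mem_Collect_eq)
    ultimately show "1 \<le> RD B q"
      unfolding RD_def hull_iff meets using assms(1)
      by (intro cINF_greatest) (auto simp: Suc_le_eq card_gt_0_iff)
  qed
qed

lemma card_le_HTvD:
  assumes "finite A" "partition_on A P" "\<forall>B\<in>P. 1 \<le> RD B q"
  shows "card P \<le> HTvD A q"
  unfolding HTvD_def
proof (rule cSup_upper)
  show "card P \<in> {r. \<exists>P. partition_on A P \<and> card P = r \<and> (\<forall>B\<in>P. 1 \<le> RD B q)}"
    using assms(2,3) by blast
  have "card P' \<le> card (Pow A)" if "partition_on A P'" for P'
    using that assms(1) by (intro card_mono) (auto simp: partition_on_def)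
  then show "bdd_above {r. \<exists>P. partition_on A P \<and> card P = r \<and> (\<forall>B\<in>P. 1 \<le> RD B q)}"
    by (intro bdd_aboveI[of _ "card (Pow A)"]) auto
qed

theorem lemma3p4:
  fixes A :: "'a::euclidean_space set set" and q :: 'a
  assumes "finite A" and "\<forall>H\<in>A. hyperplane H"
  shows "real (HTvD A q) \<ge> real (RD A q) / real DIM('a)"
proof -
  have "\<forall>H\<in>A. \<exists>c. \<forall>v. ray_meets q v H \<longleftrightarrow> c \<bullet> v \<le> 0"
    using hyperplane_ray_meets_iff_halfspace assms(2) by blast
  then obtain w where w: "\<forall>H\<in>A. \<forall>v. ray_meets q v H \<longleftrightarrow> w H \<bullet> v \<le> 0"
    by (metis bchoice)
  have "RD A q \<le> DIM('a) * HTvD A q"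
  proof (cases "0 \<in> convex hull (w ` A)")
    case True
    then obtain P v where P: "partition_on A P" "\<forall>B\<in>P. 0 \<in> convex hull (w ` B)" "v \<noteq> 0"
      "card {H\<in>A. w H \<bullet> v \<le> 0} \<le> DIM('a) * card P"
      using zero_hull_partition_with_halfspace_bound assms(1) by blast
    have "1 \<le> RD B q" if "B \<in> P" for B
    proof -
      have "B \<subseteq> A" using P(1) that by (blast dest: partition_onD1)
      then have "finite B" "\<forall>H\<in>B. \<forall>v. ray_meets q v H \<longleftrightarrow> w H \<bullet> v \<le> 0"
        using assms(1) w by (auto intro: finite_subset)
      with P(2) that show ?thesis by (metis one_le_RD_iff_zero_in_convex_hull)
    qed
    with assms(1) P(1) have "card P \<le> HTvD A q" by (simp add: card_le_HTvD)
    have "RD A q \<le> card {H\<in>A. ray_meets q v H}" using P(3) by (rule RD_le_card_ray_meets)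
    also have "\<dots> = card {H\<in>A. w H \<bullet> v \<le> 0}" using w by (intro arg_cong[where f = card]) blast
    also have "\<dots> \<le> DIM('a) * card P" by (rule P(4))
    also have "\<dots> \<le> DIM('a) * HTvD A q" using \<open>card P \<le> HTvD A q\<close> by simp
    finally show ?thesis .
  next
    case False
    then show ?thesis using one_le_RD_iff_zero_in_convex_hull[OF assms(1) w] by simp
  qed
  then show ?thesis by (simp add: field_simps flip: of_nat_mult)
qed

end
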